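(* Let $\mathbf{A}$ be a Mal'cev algebra with universe $\{0,1,2\}$. If $\mu$ is a congruence of $\mathbf{A}$ different from $0_A$ and $1_A$, then $\mu$ is the only such congruence of $\mathbf{A}$.
   Context: A Mal'cev algebra is an algebra with a term operation $d$ satisfying $d(y,x,x)\approx d(x,x,y)\approx y$. $0_A$ denotes the equality relation and $1_A=A^2$. *)

theory Defs
  imports Main
begin

text \<open>An algebra is given by a universe A and a set F of basic operations; each
operation is a pair (n, f) of its arity n and a function f on lists, meant to be
applied to lists of length n over A.\<close>

definition is_algebra :: "'a set \<Rightarrow> (nat \<times> ('a list \<Rightarrow> 'a)) set \<Rightarrow> bool" where
  "is_algebra A F \<longleftrightarrow> A \<noteq> {} \<and>
     (\<forall>(n, f) \<in> F. \<forall>xs. length xs = n \<and> set xs \<subseteq> A \<longrightarrow> f xs \<in> A)"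

inductive_set term_ops :: "(nat \<times> ('a list \<Rightarrow> 'a)) set \<Rightarrow> nat \<Rightarrow> ('a list \<Rightarrow> 'a) set"
  for F :: "(nat \<times> ('a list \<Rightarrow> 'a)) set" and n :: nat where
  proj: "i < n \<Longrightarrow> (\<lambda>xs. xs ! i) \<in> term_ops F n"
| comp: "(k, f) \<in> F \<Longrightarrow> length ts = k \<Longrightarrow> \<forall>t \<in> set ts. t \<in> term_ops F n
          \<Longrightarrow> (\<lambda>xs. f (map (\<lambda>t. t xs) ts)) \<in> term_ops F n"

definition malcev_algebra :: "'a set \<Rightarrow> (nat \<times> ('a list \<Rightarrow> 'a)) set \<Rightarrow> bool" where
  "malcev_algebra A F \<longleftrightarrow> is_algebra A F \<and>
     (\<exists>d \<in> term_ops F 3. \<forall>x \<in> A. \<forall>y \<in> A. d [y, x, x] = y \<and> d [x, x, y] = y)"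

definition congruence :: "'a set \<Rightarrow> (nat \<times> ('a list \<Rightarrow> 'a)) set \<Rightarrow> ('a \<times> 'a) set \<Rightarrow> bool" where
  "congruence A F \<theta> \<longleftrightarrow> equiv A \<theta> \<and>
     (\<forall>(n, f) \<in> F. \<forall>xs ys. length xs = n \<and> length ys = n \<and> set xs \<subseteq> A \<and> set ys \<subseteq> A \<and>
        list_all2 (\<lambda>x y. (x, y) \<in> \<theta>) xs ys \<longrightarrow> (f xs, f ys) \<in> \<theta>)"

end

theory Submission
  imports Defs
begin

text \<open>Term operations preserve congruences, so with a Mal'cev term d any two
congruences \<mu>, \<nu> permute: from x \<mu> y \<nu> z the element d(x,y,z) is \<nu>-related to
d(x,y,y) = x and \<mu>-related to d(y,y,z) = z.  A congruence other than 0 and 1 of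
an algebra on three elements identifies exactly one pair and leaves the third
element in a singleton class.  If \<mu> and \<nu> were two different such congruences,
say with x \<mu> y \<nu> c for the three elements x, y, c, permutability would give
some w with x \<nu> w \<mu> c; then w = c, so \<nu> would identify all three elements.\<close>

lemma term_ops_closed:
  assumes "is_algebra A F" "t \<in> term_ops F n" "length xs = n" "set xs \<subseteq> A"
  shows "t xs \<in> A"
  using assms(2)
proof (induction t rule: term_ops.induct)
  case (proj i)
  then show ?case using assms(3,4) by auto
next
  case (comp k f ts)
  then have "set (map (\<lambda>t. t xs) ts) \<subseteq> A" by auto
  with comp.hyps(1,2) show ?case using assms(1) unfolding is_algebra_def by fastforce
qed

lemma term_ops_congruence:
  assumes "is_algebra A F" "congruence A F \<theta>" "t \<in> term_ops F n"
    and "length xs = n" "list_all2 (\<lambda>x y. (x, y) \<in> \<theta>) xs ys"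
  shows "(t xs, t ys) \<in> \<theta>"
  using assms(3)
proof (induction t rule: term_ops.induct)
  case (proj i)
  then show ?case using assms(4,5) by (simp add: list_all2_conv_all_nth)
next
  case (comp k f ts)
  have "\<theta> \<subseteq> A \<times> A"
    using assms(2) unfolding congruence_def by (simp add: equiv_type)
  with assms(4,5) have "set xs \<subseteq> A" "set ys \<subseteq> A" "length ys = n"
    by (auto simp: list_all2_conv_all_nth set_conv_nth)
  with assms(4) comp have "set (map (\<lambda>t. t xs) ts) \<subseteq> A" "set (map (\<lambda>t. t ys) ts) \<subseteq> A"
    using term_ops_closed[OF assms(1)] by auto
  moreover have "list_all2 (\<lambda>x y. (x, y) \<in> \<theta>) (map (\<lambda>t. t xs) ts) (map (\<lambda>t. t ys) ts)"
    using comp.IH by (auto simp: list_all2_map1 list_all2_map2 list_all2_same)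
  ultimately show ?case
    using assms(2) comp.hyps(1,2) unfolding congruence_def by fastforce
qed

lemma malcev_congruences_permute:
  assumes "malcev_algebra A F" "congruence A F \<mu>" "congruence A F \<nu>"
  shows "\<mu> O \<nu> \<subseteq> \<nu> O \<mu>"
proof
  fix p assume "p \<in> \<mu> O \<nu>"
  then obtain x y z where p: "p = (x, z)" and xy: "(x, y) \<in> \<mu>" and yz: "(y, z) \<in> \<nu>"
    by blast
  have alg: "is_algebra A F" using assms(1) unfolding malcev_algebra_def by simp
  obtain d where d: "d \<in> term_ops F 3"
    and malcev: "\<And>x y. x \<in> A \<Longrightarrow> y \<in> A \<Longrightarrow> d [y, x, x] = y \<and> d [x, x, y] = y"
    using assms(1) unfolding malcev_algebra_def by blast
  have equivs: "equiv A \<mu>" "equiv A \<nu>"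
    using assms(2,3) unfolding congruence_def by simp_all
  then have A: "x \<in> A" "y \<in> A" "z \<in> A"
    using xy yz by (auto dest: equiv_type)
  have "(d [x, y, y], d [x, y, z]) \<in> \<nu>"
    using term_ops_congruence[OF alg assms(3) d] A yz equivs(2)
    by (simp add: equiv_def refl_on_def)
  moreover have "(d [x, y, z], d [y, y, z]) \<in> \<mu>"
    using term_ops_congruence[OF alg assms(2) d] A xy equivs(1)
    by (simp add: equiv_def refl_on_def)
  ultimately show "p \<in> \<nu> O \<mu>"
    using p malcev A by auto
qed

lemma equiv_on_triple_singleton_class:
  assumes "equiv {x, y, c} r" "r \<noteq> {x, y, c} \<times> {x, y, c}" "(x, y) \<in> r" "(c, w) \<in> r"
  shows "w = c"
proof (rule ccontr)
  assume "w \<noteq> c"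
  have "w \<in> {x, y}" using assms(1,4) \<open>w \<noteq> c\<close> by (auto dest: equiv_type)
  then have "(x, c) \<in> r" "(y, c) \<in> r"
    using assms(1,3,4) unfolding equiv_def by (auto elim: symE transE)
  then have "r = {x, y, c} \<times> {x, y, c}"
    using assms(1) unfolding equiv_def by (auto elim: symE transE dest: refl_onD)
  with assms(2) show False ..
qed

lemma permuting_equivs_on_triple:
  assumes "equiv {x, y, c} \<mu>" "equiv {x, y, c} \<nu>" "\<mu> O \<nu> \<subseteq> \<nu> O \<mu>"
    and "\<mu> \<noteq> {x, y, c} \<times> {x, y, c}" "(x, y) \<in> \<mu>" "(y, c) \<in> \<nu>"
  shows "(x, y) \<in> \<nu>"
proof -
  from assms(3,5,6) obtain w where "(x, w) \<in> \<nu>" "(w, c) \<in> \<mu>" by blast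
  from \<open>(w, c) \<in> \<mu>\<close> have "(c, w) \<in> \<mu>"
    using assms(1) unfolding equiv_def by (auto elim: symE)
  then have "w = c" by (rule equiv_on_triple_singleton_class[OF assms(1,4,5)])
  with \<open>(x, w) \<in> \<nu>\<close> have "(x, c) \<in> \<nu>" by simp
  with assms(2,6) show ?thesis unfolding equiv_def by (auto elim: symE transE)
qed

lemma card_3_permuting_equivs_subset:
  assumes "card A = 3" "equiv A \<mu>" "equiv A \<nu>" "\<mu> O \<nu> \<subseteq> \<nu> O \<mu>"
    and "\<mu> \<noteq> A \<times> A" "\<nu> \<noteq> Id_on A"
  shows "\<mu> \<subseteq> \<nu>"
proof safe
  fix x y assume xy: "(x, y) \<in> \<mu>"
  then have A: "x \<in> A" "y \<in> A" using assms(2) by (auto dest: equiv_type)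
  show "(x, y) \<in> \<nu>"
  proof (cases "x = y")
    case True
    then show ?thesis using A assms(3) by (simp add: equiv_def refl_on_def)
  next
    case False
    have "card (A - {x, y}) = 1"
      using assms(1) A False by (simp add: card_Diff_subset card.infinite)
    then obtain c where "A - {x, y} = {c}" by (auto simp: card_1_singleton_iff)
    then have A_xyc: "A = {x, y, c}" using A by blast
    then have A_yxc: "A = {y, x, c}" by (simp add: insert_commute)
    have sym: "sym \<mu>" "sym \<nu>" using assms(2,3) by (simp_all add: equiv_def)
    obtain u v where uv: "(u, v) \<in> \<nu>" "(v, u) \<in> \<nu>" "u \<noteq> v"
      using assms(3,6) sym(2) unfolding equiv_def refl_on_def by (auto dest: symD)
    moreover have "u \<in> {x, y, c}" "v \<in> {x, y, c}"
      using uv(1) assms(3) A_xyc by (auto dest: equiv_type)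
    ultimately consider "(x, y) \<in> \<nu>" | "(y, c) \<in> \<nu>" | "(x, c) \<in> \<nu>"
      by fastforce
    then show ?thesis
    proof cases
      case 1
      then show ?thesis .
    next
      case 2
      show ?thesis by (rule permuting_equivs_on_triple[OF assms(2-5)[unfolded A_xyc] xy 2])
    next
      case 3
      have "(y, x) \<in> \<mu>" using xy sym(1) by (rule symD[rotated])
      then have "(y, x) \<in> \<nu>"
        by (rule permuting_equivs_on_triple[OF assms(2-5)[unfolded A_yxc] _ 3])
      then show ?thesis using sym(2) by (rule symD[rotated])
    qed
  qed
qed

lemma card_3_permuting_nontrivial_equivs_eq:
  assumes "card A = 3" "equiv A \<mu>" "equiv A \<nu>" "\<mu> O \<nu> = \<nu> O \<mu>"
    and "\<mu> \<noteq> Id_on A" "\<mu> \<noteq> A \<times> A" "\<nu> \<noteq> Id_on A" "\<nu> \<noteq> A \<times> A"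
  shows "\<mu> = \<nu>"
proof (rule subset_antisym)
  show "\<mu> \<subseteq> \<nu>"
    using card_3_permuting_equivs_subset[OF assms(1-3)] assms(4,6,7) by simp
  show "\<nu> \<subseteq> \<mu>"
    using card_3_permuting_equivs_subset[OF assms(1,3,2)] assms(4,5,8) by simp
qed

theorem lemma4p1:
  fixes F :: "(nat \<times> (nat list \<Rightarrow> nat)) set" and \<mu> :: "(nat \<times> nat) set"
  assumes "malcev_algebra {0, 1, 2} F"
    and "congruence {0, 1, 2} F \<mu>"
    and "\<mu> \<noteq> Id_on {0, 1, 2}" and "\<mu> \<noteq> {0, 1, 2} \<times> {0, 1, 2}"
  shows "\<forall>\<nu>. congruence {0, 1, 2} F \<nu> \<and> \<nu> \<noteq> Id_on {0, 1, 2} \<and> \<nu> \<noteq> {0, 1, 2} \<times> {0, 1, 2}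
           \<longrightarrow> \<nu> = \<mu>"
proof (intro allI impI, elim conjE)
  fix \<nu> assume \<nu>: "congruence {0, 1, 2} F \<nu>" "\<nu> \<noteq> Id_on {0, 1, 2}"
    "\<nu> \<noteq> {0, 1, 2} \<times> {0, 1, 2}"
  show "\<nu> = \<mu>"
  proof (rule card_3_permuting_nontrivial_equivs_eq)
    show "\<nu> O \<mu> = \<mu> O \<nu>"
      using malcev_congruences_permute[OF assms(1) \<nu>(1) assms(2)]
        malcev_congruences_permute[OF assms(1) assms(2) \<nu>(1)]
      by (rule subset_antisym)
    show "equiv {0, 1, 2} \<nu>" "equiv {0, 1, 2} \<mu>"
      using \<nu>(1) assms(2) unfolding congruence_def by simp_all
  qed (use assms(3,4) \<nu>(2,3) in simp_all)
qed

end
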